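(* Let $P$ be a subgroup of $I_K(\mathfrak{n})$ with $P_{K,1}(\mathfrak{n})\subseteq P\subseteq P_K(\mathfrak{n})$ and let $\Gamma$ be a subgroup of $\mathrm{SL}_2(\mathbb{Z})$. The map $\phi_\Gamma:\mathcal{Q}_N(d_K)/\sim_\Gamma\to I_K(\mathfrak{n})/P$, $[Q]\mapsto[[\omega_Q,1]]$, is well defined and injective if and only if $\Gamma$ satisfies property (P): for every $Q\in\mathcal{Q}_N(d_K)$ and every $\gamma\in\mathrm{SL}_2(\mathbb{Z})$ with $Q^{\gamma^{-1}}\in\mathcal{Q}_N(d_K)$, one has $j(\gamma,\omega_Q)\mathcal{O}_K\in P$ if and only if $\gamma\in\Gamma\cdot I_{\omega_Q}$.
   Context: Let $K$ be an imaginary quadratic field with discriminant $d_K$ and ring of integers $\mathcal{O}_K$. Let $N$ be a positive integer and $\mathfrak{n}=N\mathcal{O}_K$. $I_K(\mathfrak{n})$ denotes the group of fractional ideals of $K$ relatively prime to $\mathfrak{n}$, $P_K(\mathfrak{n})$ its subgroup of principal fractional ideals, and $P_{K,1}(\mathfrak{n})=\{\nu\mathcal{O}_K:\nu\in K^*,\ \nu\equiv^*1\pmod{\mathfrak{n}}\}$, where $\equiv^*$ is multiplicative congruence. $\mathcal{Q}(d_K)$ is the set of primitive positive definite binary quadratic forms $ax^2+bxy+cy^2\in\mathbb{Z}[x,y]$ with $b^2-4ac=d_K$, and $\mathcal{Q}_N(d_K)=\{ax^2+bxy+cy^2\in\mathcal{Q}(d_K):\gcd(N,a)=1\}$. For $Q=ax^2+bxy+cy^2\in\mathcal{Q}(d_K)$,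 $\omega_Q=(-b+\sqrt{d_K})/(2a)\in\mathbb{H}$ and $[\omega_Q,1]=\mathbb{Z}\omega_Q+\mathbb{Z}$ (a fractional ideal of $K$). For $\gamma\in\mathrm{SL}_2(\mathbb{Z})$, $Q^\gamma(x,y)=Q(\gamma\,(x,y)^T)$. For a subgroup $\Gamma\subseteq\mathrm{SL}_2(\mathbb{Z})$, the relation $\sim_\Gamma$ on $\mathcal{Q}_N(d_K)$ is: $Q\sim_\Gamma Q'$ iff $Q'=Q^\gamma$ for some $\gamma\in\Gamma$. For $\gamma=\begin{bmatrix}a&b\\c&d\end{bmatrix}\in\mathrm{SL}_2(\mathbb{Z})$ and $\tau\in\mathbb{H}$, $j(\gamma,\tau)=c\tau+d$. $I_{\omega}$ denotes the isotropy subgroup of $\omega\in\mathbb{H}$ in $\mathrm{SL}_2(\mathbb{Z})$ under the action by fractional linear transformations. *)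

theory Defs
  imports "HOL-Analysis.Analysis" "HOL-Computational_Algebra.Squarefree"
begin

definition fund_disc_neg :: "int \<Rightarrow> bool" where
  "fund_disc_neg d \<longleftrightarrow> d < 0 \<and>
     ((d mod 4 = 1 \<and> squarefree d) \<or>
      (\<exists>m. d = 4 * m \<and> (m mod 4 = 2 \<or> m mod 4 = 3) \<and> squarefree m))"

text \<open>sqrt(d_K) with the convention that it lies in the upper half plane.\<close>
definition sqrt_disc :: "int \<Rightarrow> complex" where
  "sqrt_disc d = \<i> * complex_of_real (sqrt (real_of_int (- d)))"

definition Kfield :: "int \<Rightarrow> complex set" where
  "Kfield d = {of_real q1 + of_real q2 * sqrt_disc d | q1 q2. q1 \<in> \<rat> \<and> q2 \<in> \<rat>}"

definition OK :: "int \<Rightarrow> complex set" where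
  "OK d = {of_int m + of_int n * ((of_int d + sqrt_disc d) / 2) | m n. True}"

definition ideal_mult :: "complex set \<Rightarrow> complex set \<Rightarrow> complex set" where
  "ideal_mult A B = {x. \<exists>(n::nat) f g. (\<forall>i<n. f i \<in> A \<and> g i \<in> B) \<and> x = (\<Sum>i<n. f i * g i)}"

definition ideal_add :: "complex set \<Rightarrow> complex set \<Rightarrow> complex set" where
  "ideal_add A B = {x + y | x y. x \<in> A \<and> y \<in> B}"

definition frac_ideal :: "int \<Rightarrow> complex set \<Rightarrow> bool" where
  "frac_ideal d A \<longleftrightarrow> A \<subseteq> Kfield d \<and> 0 \<in> A \<and> A \<noteq> {0} \<and>
     (\<forall>x\<in>A. \<forall>y\<in>A. x + y \<in> A) \<and> (\<forall>r\<in>OK d. \<forall>x\<in>A. r * x \<in> A) \<and>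
     (\<exists>c\<in>OK d. c \<noteq> 0 \<and> (\<forall>x\<in>A. c * x \<in> OK d))"

definition integral_ideal :: "int \<Rightarrow> complex set \<Rightarrow> bool" where
  "integral_ideal d A \<longleftrightarrow> frac_ideal d A \<and> A \<subseteq> OK d"

text \<open>The ideal n = N O_K.\<close>
definition modulus_ideal :: "int \<Rightarrow> nat \<Rightarrow> complex set" where
  "modulus_ideal d N = {of_nat N * x | x. x \<in> OK d}"

definition principal_ideal :: "int \<Rightarrow> complex \<Rightarrow> complex set" where
  "principal_ideal d \<nu> = {\<nu> * x | x. x \<in> OK d}"

definition integral_coprime :: "int \<Rightarrow> nat \<Rightarrow> complex set \<Rightarrow> bool" where
  "integral_coprime d N B \<longleftrightarrow> integral_ideal d B \<and> ideal_add B (modulus_ideal d N) = OK d"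

text \<open>I_K(n): fractional ideals relatively prime to n, i.e. quotients B C^{-1} of integral
  ideals B, C relatively prime to n.\<close>
definition IK :: "int \<Rightarrow> nat \<Rightarrow> complex set set" where
  "IK d N = {A. frac_ideal d A \<and>
     (\<exists>B C. integral_coprime d N B \<and> integral_coprime d N C \<and> ideal_mult A C = B)}"

definition PK :: "int \<Rightarrow> nat \<Rightarrow> complex set set" where
  "PK d N = {principal_ideal d \<nu> | \<nu>. \<nu> \<in> Kfield d \<and> \<nu> \<noteq> 0 \<and> principal_ideal d \<nu> \<in> IK d N}"

definition mult_cong_one :: "int \<Rightarrow> nat \<Rightarrow> complex \<Rightarrow> bool" where
  "mult_cong_one d N \<nu> \<longleftrightarrow> (\<exists>\<alpha>\<in>OK d. \<exists>\<beta>\<in>OK d. \<alpha> \<noteq> 0 \<and> \<beta> \<noteq> 0 \<and>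
      integral_coprime d N (principal_ideal d \<alpha>) \<and> integral_coprime d N (principal_ideal d \<beta>) \<and>
      \<nu> = \<alpha> / \<beta> \<and> \<alpha> - \<beta> \<in> modulus_ideal d N)"

definition PK1 :: "int \<Rightarrow> nat \<Rightarrow> complex set set" where
  "PK1 d N = {principal_ideal d \<nu> | \<nu>. \<nu> \<in> Kfield d \<and> \<nu> \<noteq> 0 \<and> mult_cong_one d N \<nu>}"

definition ideal_subgroup :: "int \<Rightarrow> nat \<Rightarrow> complex set set \<Rightarrow> bool" where
  "ideal_subgroup d N P \<longleftrightarrow> P \<subseteq> IK d N \<and> OK d \<in> P \<and>
     (\<forall>A\<in>P. \<forall>B\<in>P. ideal_mult A B \<in> P) \<and> (\<forall>A\<in>P. \<exists>B\<in>P. ideal_mult A B = OK d)"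

definition same_class :: "complex set set \<Rightarrow> complex set \<Rightarrow> complex set \<Rightarrow> bool" where
  "same_class P A B \<longleftrightarrow> (\<exists>C\<in>P. A = ideal_mult C B)"

section \<open>SL_2(Z): a matrix [[p,q],[r,s]] is the tuple (p,q,r,s)\<close>

type_synonym mat2 = "int \<times> int \<times> int \<times> int"

definition SL2Z :: "mat2 set" where
  "SL2Z = {(p, q, r, s). p * s - q * r = 1}"

definition mat_mult :: "mat2 \<Rightarrow> mat2 \<Rightarrow> mat2" where
  "mat_mult = (\<lambda>(p, q, r, s) (p', q', r', s').
     (p * p' + q * r', p * q' + q * s', r * p' + s * r', r * q' + s * s'))"

text \<open>Inverse of a determinant-one matrix.\<close>
definition mat_inv :: "mat2 \<Rightarrow> mat2" where
  "mat_inv = (\<lambda>(p, q, r, s). (s, - q, - r, p))"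

definition mat_id :: mat2 where "mat_id = (1, 0, 0, 1)"

definition SL2_subgroup :: "mat2 set \<Rightarrow> bool" where
  "SL2_subgroup G \<longleftrightarrow> G \<subseteq> SL2Z \<and> mat_id \<in> G \<and>
     (\<forall>x\<in>G. \<forall>y\<in>G. mat_mult x y \<in> G) \<and> (\<forall>x\<in>G. mat_inv x \<in> G)"

definition moebius :: "mat2 \<Rightarrow> complex \<Rightarrow> complex" where
  "moebius = (\<lambda>(p, q, r, s) \<tau>. (of_int p * \<tau> + of_int q) / (of_int r * \<tau> + of_int s))"

definition jfac :: "mat2 \<Rightarrow> complex \<Rightarrow> complex" where
  "jfac = (\<lambda>(p, q, r, s) \<tau>. of_int r * \<tau> + of_int s)"

definition isotropy :: "complex \<Rightarrow> mat2 set" where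
  "isotropy \<omega> = {\<gamma> \<in> SL2Z. moebius \<gamma> \<omega> = \<omega>}"

definition set_mult :: "mat2 set \<Rightarrow> mat2 set \<Rightarrow> mat2 set" where
  "set_mult G H = {mat_mult g h | g h. g \<in> G \<and> h \<in> H}"

section \<open>Binary quadratic forms a x^2 + b x y + c y^2 as triples (a,b,c)\<close>

type_synonym qform = "int \<times> int \<times> int"

definition Qforms :: "int \<Rightarrow> qform set" where
  "Qforms d = {(a, b, c). b^2 - 4 * a * c = d \<and> a > 0 \<and> gcd a (gcd b c) = 1}"

definition QformsN :: "int \<Rightarrow> nat \<Rightarrow> qform set" where
  "QformsN d N = {(a, b, c) \<in> Qforms d. gcd (int N) a = 1}"

text \<open>Q^gamma(x,y) = Q(p x + q y, r x + s y), coefficients written out.\<close>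
definition qform_act :: "qform \<Rightarrow> mat2 \<Rightarrow> qform" where
  "qform_act = (\<lambda>(a, b, c) (p, q, r, s).
     (a * p^2 + b * p * r + c * r^2,
      2 * a * p * q + b * (p * s + q * r) + 2 * c * r * s,
      a * q^2 + b * q * s + c * s^2))"

definition omegaQ :: "int \<Rightarrow> qform \<Rightarrow> complex" where
  "omegaQ d = (\<lambda>(a, b, c). (- of_int b + sqrt_disc d) / (2 * of_int a))"

definition lattice1 :: "complex \<Rightarrow> complex set" where
  "lattice1 \<omega> = {of_int m * \<omega> + of_int n | m n. True}"

definition form_equiv :: "int \<Rightarrow> nat \<Rightarrow> mat2 set \<Rightarrow> qform \<Rightarrow> qform \<Rightarrow> bool" where
  "form_equiv d N G Q Q' \<longleftrightarrow> Q \<in> QformsN d N \<and> Q' \<in> QformsN d N \<and> (\<exists>\<gamma>\<in>G. Q' = qform_act Q \<gamma>)"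

definition phi_well_defined :: "int \<Rightarrow> nat \<Rightarrow> complex set set \<Rightarrow> mat2 set \<Rightarrow> bool" where
  "phi_well_defined d N P G \<longleftrightarrow>
     (\<forall>Q\<in>QformsN d N. lattice1 (omegaQ d Q) \<in> IK d N) \<and>
     (\<forall>Q Q'. form_equiv d N G Q Q' \<longrightarrow>
         same_class P (lattice1 (omegaQ d Q)) (lattice1 (omegaQ d Q')))"

definition phi_injective :: "int \<Rightarrow> nat \<Rightarrow> complex set set \<Rightarrow> mat2 set \<Rightarrow> bool" where
  "phi_injective d N P G \<longleftrightarrow>
     (\<forall>Q\<in>QformsN d N. \<forall>Q'\<in>QformsN d N.
        same_class P (lattice1 (omegaQ d Q)) (lattice1 (omegaQ d Q')) \<longrightarrow> form_equiv d N G Q Q')"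

definition property_P :: "int \<Rightarrow> nat \<Rightarrow> complex set set \<Rightarrow> mat2 set \<Rightarrow> bool" where
  "property_P d N P G \<longleftrightarrow>
     (\<forall>Q\<in>QformsN d N. \<forall>\<gamma>\<in>SL2Z. qform_act Q (mat_inv \<gamma>) \<in> QformsN d N \<longrightarrow>
        (principal_ideal d (jfac \<gamma> (omegaQ d Q)) \<in> P \<longleftrightarrow>
         \<gamma> \<in> set_mult G (isotropy (omegaQ d Q))))"

end

theory Submission
  imports Defs
begin

text \<open>For Q in Q_N(d_K) the lattice [\<omega>_Q, 1] is a fractional ideal in I_K(n) whose multiplier
  ring is O_K. For \<gamma> in SL_2(Z) the root of Q^(\<gamma>^-1) is \<gamma>\<omega>_Q and
  [\<omega>_Q, 1] = j(\<gamma>, \<omega>_Q) [\<gamma>\<omega>_Q, 1]; conversely, homothetic lattices [\<omega>_Q, 1] and [\<omega>_Q', 1]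
  always arise in this way. As the multiplier ring is O_K, a homothety factor between two such
  lattices is determined up to a unit, so Q and Q^(\<gamma>^-1) have lattices in the same class of
  I_K(n)/P iff j(\<gamma>, \<omega>_Q) O_K \<in> P. On the other side, \<omega>_Q determines Q, so Q^(\<gamma>^-1) is
  \<Gamma>-equivalent to Q iff \<gamma> \<in> \<Gamma> I_\<omega>_Q. Well-definedness plus injectivity of \<phi>_\<Gamma> says that
  "same class" and "\<Gamma>-equivalent" coincide on Q_N(d_K), and by the above this is property (P).\<close>

definition neg_disc :: "int \<Rightarrow> bool" where
  "neg_disc d \<longleftrightarrow> d < 0 \<and> (d mod 4 = 0 \<or> d mod 4 = 1)"

lemma fund_disc_neg_imp_neg_disc: "fund_disc_neg d \<Longrightarrow> neg_disc d"
  unfolding fund_disc_neg_def neg_disc_def by auto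

lemma sqrt_disc_squared: "d \<le> 0 \<Longrightarrow> (sqrt_disc d)^2 = of_int d"
  by (simp add: sqrt_disc_def power_mult_distrib flip: of_real_power)

lemma Re_sqrt_disc [simp]: "Re (sqrt_disc d) = 0"
  and Im_sqrt_disc [simp]: "Im (sqrt_disc d) = sqrt (real_of_int (- d))"
  by (simp_all add: sqrt_disc_def)

subsection \<open>The ring of integers\<close>

definition OK_generator :: "int \<Rightarrow> complex" where
  "OK_generator d = (of_int d + sqrt_disc d) / 2"

lemma OK_iff: "x \<in> OK d \<longleftrightarrow> (\<exists>m n. x = of_int m + of_int n * OK_generator d)"
  by (auto simp: OK_def OK_generator_def)

lemma OK_generator_squared:
  assumes "neg_disc d"
  shows "(OK_generator d)^2 = of_int d * OK_generator d + of_int ((d - d^2) div 4)"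
proof -
  have "4 dvd d \<or> 4 dvd d - 1" using assms unfolding neg_disc_def by presburger
  hence "4 dvd d * (d - 1)" by auto
  moreover have "d - d^2 = - (d * (d - 1))" by (simp add: power2_eq_square algebra_simps)
  ultimately obtain k where k: "d - d^2 = 4 * k" by (metis dvd_minus_iff dvdE)
  hence kdiv: "(d - d^2) div 4 = k" by simp
  have "sqrt_disc d * sqrt_disc d = of_int d"
    using sqrt_disc_squared[of d] assms by (simp add: neg_disc_def power2_eq_square)
  hence "4 * ((OK_generator d)^2 - of_int d * OK_generator d) = of_int (d - d^2)"
    by (simp add: OK_generator_def power2_eq_square field_simps)
  also have "\<dots> = 4 * of_int k" using k by simp
  finally have "(OK_generator d)^2 - of_int d * OK_generator d = of_int k"
    by (simp only: mult_cancel_left) simp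
  thus ?thesis unfolding kdiv by (simp add: diff_eq_eq add.commute)
qed

lemma OK_add: "x \<in> OK d \<Longrightarrow> y \<in> OK d \<Longrightarrow> x + y \<in> OK d"
  unfolding OK_iff
proof (elim exE)
  fix m n m' n' assume "x = of_int m + of_int n * OK_generator d" "y = of_int m' + of_int n' * OK_generator d"
  thus "\<exists>m n. x + y = of_int m + of_int n * OK_generator d"
    by (intro exI[of _ "m + m'"] exI[of _ "n + n'"]) (simp add: algebra_simps)
qed

lemma OK_of_int [simp]: "of_int m \<in> OK d"
  unfolding OK_iff by (intro exI[of _ m] exI[of _ 0]) simp

lemma OK_one [simp]: "1 \<in> OK d" and OK_zero [simp]: "0 \<in> OK d"
  using OK_of_int[of 1 d] OK_of_int[of 0 d] by simp_all

lemma OK_of_int_mult: "x \<in> OK d \<Longrightarrow> of_int k * x \<in> OK d"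
  unfolding OK_iff
proof (elim exE)
  fix m n assume "x = of_int m + of_int n * OK_generator d"
  thus "\<exists>m n. of_int k * x = of_int m + of_int n * OK_generator d"
    by (intro exI[of _ "k * m"] exI[of _ "k * n"]) (simp add: algebra_simps)
qed

lemma OK_mult:
  assumes "neg_disc d" "x \<in> OK d" "y \<in> OK d"
  shows "x * y \<in> OK d"
proof -
  obtain m n m' n' where x: "x = of_int m + of_int n * OK_generator d"
    and y: "y = of_int m' + of_int n' * OK_generator d"
    using assms(2,3) unfolding OK_iff by blast
  define e where "e = (d - d^2) div 4"
  have "x * y = of_int (m * m') + of_int (m * n' + n * m') * OK_generator d
      + of_int (n * n') * (OK_generator d)^2"
    unfolding x y by (simp add: algebra_simps power2_eq_square)
  also have "\<dots> = of_int (m * m' + n * n' * e) + of_int (m * n' + n * m' + n * n' * d) * OK_generator d"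
    unfolding OK_generator_squared[OF assms(1)] e_def[symmetric] by (simp add: algebra_simps)
  finally show ?thesis unfolding OK_iff by blast
qed

definition OK_module :: "int \<Rightarrow> complex set \<Rightarrow> bool" where
  "OK_module d X \<longleftrightarrow> 0 \<in> X \<and> (\<forall>x\<in>X. \<forall>y\<in>X. x + y \<in> X) \<and> (\<forall>r\<in>OK d. \<forall>x\<in>X. r * x \<in> X)"

lemma OK_module_OK: "neg_disc d \<Longrightarrow> OK_module d (OK d)"
  unfolding OK_module_def using OK_add OK_mult by auto

lemma OK_module_scale: "OK_module d X \<Longrightarrow> OK_module d ((*) v ` X)"
  unfolding OK_module_def by (auto simp flip: distrib_left)

lemma OK_module_sum:
  assumes "OK_module d X" "\<forall>i<(n::nat). h i \<in> X"
  shows "(\<Sum>i<n. h i) \<in> X"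
  using assms(2) by (induction n) (use assms(1) in \<open>auto simp: OK_module_def\<close>)

lemma principal_ideal_eq_image: "principal_ideal d v = (*) v ` OK d"
  by (auto simp: principal_ideal_def)

lemma ideal_mult_commute: "ideal_mult A B = ideal_mult B A"
proof -
  have "ideal_mult A B \<subseteq> ideal_mult B A" for A B
  proof
    fix x assume "x \<in> ideal_mult A B"
    then obtain n :: nat and f g where "\<forall>i<n. f i \<in> A \<and> g i \<in> B" "x = (\<Sum>i<n. f i * g i)"
      unfolding ideal_mult_def by blast
    thus "x \<in> ideal_mult B A" unfolding ideal_mult_def
      by (intro CollectI exI[of _ n] exI[of _ g] exI[of _ f]) (simp add: mult.commute)
  qed
  thus ?thesis by blast
qed

lemma ideal_mult_principal_ideal:
  assumes "OK_module d X"
  shows "ideal_mult (principal_ideal d v) X = (*) v ` X"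
proof (intro set_eqI iffI)
  fix x assume "x \<in> ideal_mult (principal_ideal d v) X"
  then obtain n :: nat and f g where fg: "\<forall>i<n. f i \<in> principal_ideal d v \<and> g i \<in> X"
    and x: "x = (\<Sum>i<n. f i * g i)"
    unfolding ideal_mult_def by blast
  have "\<forall>i. \<exists>e. i < n \<longrightarrow> f i = v * e \<and> e \<in> OK d"
    using fg unfolding principal_ideal_def by blast
  then obtain e where e: "\<forall>i<n. f i = v * e i \<and> e i \<in> OK d"
    by (metis choice)
  have "x = v * (\<Sum>i<n. e i * g i)"
    unfolding x sum_distrib_left using e by (auto intro: sum.cong simp: mult.assoc)
  moreover have "(\<Sum>i<n. e i * g i) \<in> X"
    using assms fg e by (intro OK_module_sum) (auto simp: OK_module_def)
  ultimately show "x \<in> (*) v ` X" by blast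
next
  fix x assume "x \<in> (*) v ` X"
  then obtain y where y: "x = v * y" "y \<in> X" by blast
  have "v \<in> principal_ideal d v" unfolding principal_ideal_def using OK_one by force
  thus "x \<in> ideal_mult (principal_ideal d v) X" unfolding ideal_mult_def
    by (intro CollectI exI[of _ 1] exI[of _ "\<lambda>_. v"] exI[of _ "\<lambda>_. y"]) (simp add: y)
qed

lemma lattice1_iff: "x \<in> lattice1 w \<longleftrightarrow> (\<exists>m n. x = of_int m * w + of_int n)"
  by (auto simp: lattice1_def)

lemma lattice1_add: "x \<in> lattice1 w \<Longrightarrow> y \<in> lattice1 w \<Longrightarrow> x + y \<in> lattice1 w"
  unfolding lattice1_iff
proof (elim exE)
  fix m n m' n' assume "x = of_int m * w + of_int n" "y = of_int m' * w + of_int n'"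
  thus "\<exists>m n. x + y = of_int m * w + of_int n"
    by (intro exI[of _ "m + m'"] exI[of _ "n + n'"]) (simp add: algebra_simps)
qed

lemma lattice1_of_int_mult: "x \<in> lattice1 w \<Longrightarrow> of_int k * x \<in> lattice1 w"
  unfolding lattice1_iff
proof (elim exE)
  fix m n assume "x = of_int m * w + of_int n"
  thus "\<exists>m n. of_int k * x = of_int m * w + of_int n"
    by (intro exI[of _ "k * m"] exI[of _ "k * n"]) (simp add: algebra_simps)
qed

lemma lattice1_of_int [simp]: "of_int k \<in> lattice1 w"
  unfolding lattice1_iff by (intro exI[of _ 0] exI[of _ k]) simp

lemma lattice1_one [simp]: "1 \<in> lattice1 w" and lattice1_zero [simp]: "0 \<in> lattice1 w"
  using lattice1_of_int[of 1 w] lattice1_of_int[of 0 w] by simp_all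

lemma lattice1_self [simp]: "w \<in> lattice1 w"
  unfolding lattice1_iff by (intro exI[of _ 1] exI[of _ 0]) simp

lemma lattice1_coeffs_unique:
  assumes "Im w \<noteq> 0" "of_int m * w + of_int n = of_int m' * w + of_int n'"
  shows "m = m' \<and> n = n'"
proof -
  have "Im (of_int m * w + of_int n) = Im (of_int m' * w + of_int n')" using assms(2) by simp
  hence "m = m'" using assms(1) by simp
  thus ?thesis using assms(2) by simp
qed

subsection \<open>Forms and their roots in the upper half-plane\<close>

lemma Qforms_iff: "(a, b, c) \<in> Qforms d \<longleftrightarrow> b^2 - 4 * a * c = d \<and> a > 0 \<and> gcd a (gcd b c) = 1"
  by (simp add: Qforms_def)

lemma omegaQ_eq_real_combination:
  "omegaQ d (a, b, c) =
     of_real (- real_of_int b / (2 * real_of_int a)) + of_real (1 / (2 * real_of_int a)) * sqrt_disc d"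
  unfolding omegaQ_def by (cases "a = 0") (simp_all add: field_simps)

lemma Re_omegaQ: "Re (omegaQ d (a, b, c)) = - real_of_int b / (2 * real_of_int a)"
  and Im_omegaQ: "Im (omegaQ d (a, b, c)) = sqrt (real_of_int (- d)) / (2 * real_of_int a)"
  unfolding omegaQ_eq_real_combination by simp_all

lemma Im_omegaQ_pos: "Q \<in> Qforms d \<Longrightarrow> d < 0 \<Longrightarrow> Im (omegaQ d Q) > 0"
  by (cases Q) (simp add: Qforms_iff Im_omegaQ)

lemma omegaQ_sqrt_disc:
  assumes "(a, b, c) \<in> Qforms d"
  shows "2 * of_int a * omegaQ d (a, b, c) + of_int b = sqrt_disc d"
  using assms by (simp add: Qforms_iff omegaQ_def)

lemma omegaQ_root:
  assumes "(a, b, c) \<in> Qforms d" "d < 0"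
  shows "of_int a * (omegaQ d (a, b, c))^2 + of_int b * omegaQ d (a, b, c) + of_int c = 0"
proof -
  define w where "w = omegaQ d (a, b, c)"
  have "(2 * of_int a * w + of_int b)^2 = (of_int (b^2 - 4 * a * c) :: complex)"
    using omegaQ_sqrt_disc[OF assms(1)] sqrt_disc_squared[of d] assms unfolding w_def
    by (simp add: Qforms_iff)
  hence "4 * of_int a * (of_int a * w^2 + of_int b * w + of_int c) = (0::complex)"
    by (simp add: power2_eq_square algebra_simps)
  thus ?thesis using assms(1) unfolding w_def by (simp add: Qforms_iff)
qed

lemma omegaQ_unique_root:
  assumes "(a, b, c) \<in> Qforms d" "d < 0" "Im z > 0"
    and "of_int a * z^2 + of_int b * z + of_int c = 0"
  shows "z = omegaQ d (a, b, c)"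
proof -
  have a: "a > 0" and disc: "b^2 - 4 * a * c = d" using assms(1) by (simp_all add: Qforms_iff)
  have "(2 * of_int a * z + of_int b)^2
      = 4 * of_int a * (of_int a * z^2 + of_int b * z + of_int c) + of_int (b^2 - 4 * a * c)"
    by (simp add: power2_eq_square algebra_simps)
  also have "\<dots> = (sqrt_disc d)^2" using assms(2,4) disc sqrt_disc_squared[of d] by force
  finally have "2 * of_int a * z + of_int b = sqrt_disc d \<or> 2 * of_int a * z + of_int b = - sqrt_disc d"
    using power2_eq_iff by blast
  moreover have "Im (2 * of_int a * z + of_int b) > 0" using a assms(3) by simp
  moreover have "Im (- sqrt_disc d) \<le> 0" using assms(2) by simp
  ultimately have "2 * of_int a * z + of_int b = 2 * of_int a * omegaQ d (a, b, c) + of_int b"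
    unfolding omegaQ_sqrt_disc[OF assms(1)] by force
  thus ?thesis using a by simp
qed

lemma omegaQ_inj:
  assumes "Q1 \<in> Qforms d" "Q2 \<in> Qforms d" "d < 0" "omegaQ d Q1 = omegaQ d Q2"
  shows "Q1 = Q2"
proof -
  obtain a b c a' b' c' where Q: "Q1 = (a, b, c)" "Q2 = (a', b', c')" by (cases Q1, cases Q2) auto
  have a: "a > 0" "b^2 - 4 * a * c = d" "a' > 0" "b'^2 - 4 * a' * c' = d"
    using assms Q by (auto simp: Qforms_iff)
  have "sqrt (real_of_int (- d)) / (2 * real_of_int a) = sqrt (real_of_int (- d)) / (2 * real_of_int a')"
    using arg_cong[OF assms(4), of Im] unfolding Q Im_omegaQ .
  hence aa: "a = a'" using assms(3) a by (simp add: field_simps)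
  have "- real_of_int b / (2 * real_of_int a) = - real_of_int b' / (2 * real_of_int a')"
    using arg_cong[OF assms(4), of Re] unfolding Q Re_omegaQ .
  hence bb: "b = b'" using aa a by (simp add: field_simps)
  have "4 * a * c = 4 * a * c'" using a(2) a(4) unfolding aa bb by linarith
  thus ?thesis using aa bb Q a(1) by simp
qed

lemma b_plus_disc_even: "b^2 - 4 * a * c = d \<Longrightarrow> even (b + (d::int))"
proof -
  assume "b^2 - 4 * a * c = d"
  hence "b + d = b * (b + 1) - 2 * (2 * a * c)" by (simp add: power2_eq_square algebra_simps)
  thus ?thesis by simp
qed

lemma OK_generator_eq_omegaQ:
  assumes "(a, b, c) \<in> Qforms d"
  shows "OK_generator d = of_int a * omegaQ d (a, b, c) + of_int ((b + d) div 2)"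
proof -
  have "even (b + d)" using assms b_plus_disc_even by (auto simp: Qforms_iff)
  then obtain t where "b + d = 2 * t" by blast
  hence "of_int ((b + d) div 2) = (of_int b + of_int d) / (2::complex)"
    by (simp add: field_simps) (metis of_int_add of_int_mult of_int_numeral)
  thus ?thesis using omegaQ_sqrt_disc[OF assms] unfolding OK_generator_def
    by (simp add: field_simps)
qed

lemma lattice1_omegaQ_OK_module:
  assumes "Q \<in> Qforms d" "d < 0"
  shows "OK_module d (lattice1 (omegaQ d Q))"
proof -
  obtain a b c where Q: "Q = (a, b, c)" by (cases Q)
  define w where "w = omegaQ d Q"
  have root: "of_int a * w^2 = - of_int b * w - of_int c"
    using omegaQ_root assms unfolding Q w_def by (simp add: algebra_simps eq_neg_iff_add_eq_0)
  have gen: "OK_generator d * x \<in> lattice1 w" if x: "x \<in> lattice1 w" for x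
  proof -
    define t where "t = (b + d) div 2"
    obtain m n where x: "x = of_int m * w + of_int n" using x unfolding lattice1_iff by blast
    have "OK_generator d * x = of_int m * (of_int a * w^2) + of_int (m * t + n * a) * w + of_int (n * t)"
      unfolding OK_generator_eq_omegaQ[OF assms(1)[unfolded Q]] x w_def t_def Q
      by (simp add: algebra_simps power2_eq_square)
    also have "\<dots> = of_int (m * t + n * a - m * b) * w + of_int (n * t - m * c)"
      unfolding root by (simp add: algebra_simps)
    finally show ?thesis unfolding lattice1_iff by blast
  qed
  have "r * x \<in> lattice1 w" if r: "r \<in> OK d" and x: "x \<in> lattice1 w" for r x
  proof -
    obtain m n where r: "r = of_int m + of_int n * OK_generator d" using r unfolding OK_iff by blast
    have "r * x = of_int m * x + of_int n * (OK_generator d * x)" unfolding r by (simp add: algebra_simps)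
    thus ?thesis using lattice1_add lattice1_of_int_mult gen x by metis
  qed
  thus ?thesis unfolding OK_module_def w_def using lattice1_add by auto
qed

text \<open>Primitivity of Q is essential: for Q = k Q0 the multiplier ring is the larger order of
  discriminant d / k^2.\<close>

lemma lattice1_omegaQ_multiplier_in_OK:
  assumes "(a, b, c) \<in> Qforms d" "d < 0"
    and "\<forall>x\<in>lattice1 (omegaQ d (a, b, c)). u * x \<in> lattice1 (omegaQ d (a, b, c))"
  shows "u \<in> OK d"
proof -
  define w where "w = omegaQ d (a, b, c)"
  have g1: "gcd a (gcd b c) = 1" using assms(1) by (simp add: Qforms_iff)
  have wIm: "Im w \<noteq> 0" using Im_omegaQ_pos assms unfolding w_def by fastforce
  have "u * 1 \<in> lattice1 w" "u * w \<in> lattice1 w"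
    using assms(3) lattice1_one lattice1_self unfolding w_def by blast+
  then obtain m n M N where u: "u = of_int m * w + of_int n" and uw: "u * w = of_int M * w + of_int N"
    unfolding lattice1_iff by auto
  have root: "of_int a * w^2 = - of_int b * w - of_int c"
    using omegaQ_root[OF assms(1,2)] unfolding w_def[symmetric] by (simp add: algebra_simps eq_neg_iff_add_eq_0)
  have "of_int (n * a - m * b) * w + of_int (- m * c) = of_int a * (u * w)"
  proof -
    have "of_int a * (u * w) = of_int m * (of_int a * w^2) + of_int (n * a) * w"
      unfolding u by (simp add: algebra_simps power2_eq_square)
    thus ?thesis unfolding root by (simp add: algebra_simps)
  qed
  also have "\<dots> = of_int (a * M) * w + of_int (a * N)" unfolding uw by (simp add: algebra_simps)
  finally have "n * a - m * b = a * M \<and> - m * c = a * N" by (rule lattice1_coeffs_unique[OF wIm])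
  hence "m * b = a * (n - M)" "m * c = a * (- N)" by (simp_all add: algebra_simps)
  hence "a dvd m * b" "a dvd m * c" by simp_all
  hence "a dvd \<bar>m\<bar> * gcd b c" by (simp add: gcd_mult_distrib_int)
  hence "a dvd \<bar>m * gcd b c\<bar>" by (simp add: abs_mult)
  hence "a dvd m * gcd b c" by (simp only: dvd_abs_iff)
  moreover have "coprime a (gcd b c)" using g1 by (simp add: coprime_iff_gcd_eq_1)
  ultimately have "a dvd m" by (simp add: coprime_dvd_mult_left_iff)
  then obtain k where k: "m = a * k" by blast
  have "u = of_int k * (of_int a * w + of_int ((b + d) div 2)) + of_int (n - k * ((b + d) div 2))"
    unfolding u k by (simp add: algebra_simps)
  also have "\<dots> = of_int (n - k * ((b + d) div 2)) + of_int k * OK_generator d"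
    using OK_generator_eq_omegaQ[OF assms(1)] unfolding w_def by simp
  finally show ?thesis unfolding OK_iff by blast
qed

lemma principal_ideal_eq_if_homothetic_lattice1:
  assumes "Q \<in> Qforms d" "neg_disc d" "v \<noteq> 0" "\<mu> \<noteq> 0"
    and "(*) v ` lattice1 (omegaQ d Q) = (*) \<mu> ` lattice1 (omegaQ d Q)"
  shows "principal_ideal d v = principal_ideal d \<mu>"
proof -
  obtain a b c where Q: "Q = (a, b, c)" by (cases Q)
  have d0: "d < 0" using assms(2) by (simp add: neg_disc_def)
  define L where "L = lattice1 (omegaQ d Q)"
  have sub: "principal_ideal d x \<subseteq> principal_ideal d y"
    if y: "y \<noteq> 0" and xy: "(*) x ` L \<subseteq> (*) y ` L" for x y
  proof -
    have "\<forall>z\<in>L. (x / y) * z \<in> L"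
    proof
      fix z assume "z \<in> L"
      then obtain z' where "x * z = y * z'" "z' \<in> L" using xy by blast
      thus "(x / y) * z \<in> L" using y by (simp add: field_simps)
    qed
    hence "x / y \<in> OK d" using lattice1_omegaQ_multiplier_in_OK assms(1) d0 unfolding L_def Q by blast
    hence "x / y * e \<in> OK d" if "e \<in> OK d" for e using OK_mult[OF assms(2) _ that] by blast
    moreover have "x * e = y * (x / y * e)" for e using y by simp
    ultimately have "x * e \<in> (*) y ` OK d" if "e \<in> OK d" for e using that by blast
    thus ?thesis unfolding principal_ideal_eq_image by blast
  qed
  show ?thesis using sub[of \<mu> v] sub[of v \<mu>] assms(3-5) unfolding L_def by blast
qed

subsection \<open>The action of SL_2(Z)\<close>

lemma SL2Z_iff: "(p, q, r, s) \<in> SL2Z \<longleftrightarrow> p * s - q * r = 1"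
  by (simp add: SL2Z_def)

lemma jfac_eq: "jfac (p, q, r, s) t = of_int r * t + of_int s"
  and moebius_eq: "moebius (p, q, r, s) t = (of_int p * t + of_int q) / (of_int r * t + of_int s)"
  by (simp_all add: jfac_def moebius_def)

lemma jfac_nonzero:
  assumes "\<gamma> \<in> SL2Z" "Im t \<noteq> 0"
  shows "jfac \<gamma> t \<noteq> 0"
proof
  obtain p q r s where \<gamma>: "\<gamma> = (p, q, r, s)" by (cases \<gamma>)
  assume "jfac \<gamma> t = 0"
  hence "of_int r * t + of_int s = of_int 0 * t + of_int 0" unfolding \<gamma> jfac_eq by simp
  hence "r = 0 \<and> s = 0" using lattice1_coeffs_unique[OF assms(2)] by blast
  thus False using assms(1) unfolding \<gamma> SL2Z_iff by simp
qed

lemma Im_moebius: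
  "Im (moebius (p, q, r, s) t) = of_int (p * s - q * r) * Im t / (cmod (of_int r * t + of_int s))^2"
proof -
  have "real_of_int p * Im t * (real_of_int r * Re t + real_of_int s)
      - (real_of_int p * Re t + real_of_int q) * (real_of_int r * Im t) = of_int (p * s - q * r) * Im t"
    by (simp add: algebra_simps)
  thus ?thesis unfolding moebius_eq Im_divide cmod_power2 by (simp add: power2_eq_square)
qed

lemma Im_moebius_pos:
  assumes "\<gamma> \<in> SL2Z" "Im t > 0"
  shows "Im (moebius \<gamma> t) > 0"
proof -
  obtain p q r s where \<gamma>: "\<gamma> = (p, q, r, s)" by (cases \<gamma>)
  have "jfac \<gamma> t \<noteq> 0" using jfac_nonzero[of \<gamma> t] assms by simp
  thus ?thesis using assms unfolding \<gamma> Im_moebius SL2Z_iff jfac_eq by simp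
qed

lemma mat_inv_SL2Z: "\<gamma> \<in> SL2Z \<Longrightarrow> mat_inv \<gamma> \<in> SL2Z"
  by (cases \<gamma>) (simp add: mat_inv_def SL2Z_iff algebra_simps)

lemma mat_inv_mat_inv [simp]: "mat_inv (mat_inv \<gamma>) = \<gamma>"
  by (cases \<gamma>) (simp add: mat_inv_def)

lemma mat_mult_SL2Z:
  assumes "\<gamma> \<in> SL2Z" "\<delta> \<in> SL2Z"
  shows "mat_mult \<gamma> \<delta> \<in> SL2Z"
proof -
  obtain p q r s p' q' r' s' where \<gamma>: "\<gamma> = (p, q, r, s)" and \<delta>: "\<delta> = (p', q', r', s')"
    by (cases \<gamma>, cases \<delta>)
  have "(p * p' + q * r') * (r * q' + s * s') - (p * q' + q * s') * (r * p' + s * r')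
      = (p * s - q * r) * (p' * s' - q' * r')"
    by (simp add: algebra_simps)
  also have "\<dots> = 1" using assms unfolding \<gamma> \<delta> SL2Z_iff by simp
  finally show ?thesis unfolding \<gamma> \<delta> mat_mult_def by (simp add: SL2Z_iff)
qed

lemma mat_mult_inv_cancel_left: "\<gamma> \<in> SL2Z \<Longrightarrow> mat_mult (mat_inv \<gamma>) (mat_mult \<gamma> \<delta>) = \<delta>"
  by (cases \<gamma>, cases \<delta>) (auto simp: mat_inv_def mat_mult_def SL2Z_iff algebra_simps;
      simp_all add: mult.assoc[symmetric] distrib_right)

lemma moebius_mat_mult:
  assumes "\<delta> \<in> SL2Z" "Im t \<noteq> 0"
  shows "moebius (mat_mult \<gamma> \<delta>) t = moebius \<gamma> (moebius \<delta> t)"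
proof -
  obtain p q r s p' q' r' s' where \<gamma>: "\<gamma> = (p, q, r, s)" and \<delta>: "\<delta> = (p', q', r', s')"
    by (cases \<gamma>, cases \<delta>)
  have "jfac \<delta> t \<noteq> 0" using jfac_nonzero assms by blast
  hence "of_int r' * t + of_int s' \<noteq> 0" unfolding \<delta> jfac_eq .
  thus ?thesis unfolding \<gamma> \<delta> mat_mult_def
    by (simp add: moebius_eq divide_simps) (simp add: algebra_simps)
qed

lemma moebius_mat_inv_left:
  assumes "\<gamma> \<in> SL2Z" "Im t \<noteq> 0"
  shows "moebius (mat_inv \<gamma>) (moebius \<gamma> t) = t"
proof -
  have "mat_mult (mat_inv \<gamma>) \<gamma> = mat_id"
    using assms(1) by (cases \<gamma>) (simp add: mat_inv_def mat_mult_def mat_id_def SL2Z_iff algebra_simps)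
  thus ?thesis using moebius_mat_mult[OF assms, of "mat_inv \<gamma>"] by (simp add: mat_id_def moebius_eq)
qed

lemma moebius_mat_inv_right:
  assumes "\<gamma> \<in> SL2Z" "Im t \<noteq> 0"
  shows "moebius \<gamma> (moebius (mat_inv \<gamma>) t) = t"
  using moebius_mat_inv_left[OF mat_inv_SL2Z[OF assms(1)] assms(2)] by simp

lemma lattice1_moebius:
  assumes "\<delta> \<in> SL2Z" "Im t \<noteq> 0"
  shows "lattice1 t = (*) (jfac \<delta> t) ` lattice1 (moebius \<delta> t)"
proof -
  obtain p q r s where \<delta>: "\<delta> = (p, q, r, s)" by (cases \<delta>)
  have det: "p * s - q * r = 1" using assms(1) unfolding \<delta> SL2Z_iff .
  define J where "J = of_int r * t + of_int s"
  have "jfac \<delta> t \<noteq> 0" using jfac_nonzero assms by blast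
  hence J: "J \<noteq> 0" unfolding J_def \<delta> jfac_eq .
  have jm: "jfac \<delta> t = J" "moebius \<delta> t = (of_int p * t + of_int q) / J"
    unfolding \<delta> J_def jfac_eq moebius_eq by simp_all
  have key: "J * (of_int m * moebius \<delta> t + of_int n) = of_int (m * p + n * r) * t + of_int (m * q + n * s)"
    for m n
    using J unfolding jm J_def by (simp add: field_simps)
  show ?thesis
  proof (intro set_eqI iffI)
    fix x assume "x \<in> lattice1 t"
    then obtain M N where x: "x = of_int M * t + of_int N" unfolding lattice1_iff by blast
    have "(M * s - N * r) * p + (N * p - M * q) * r = M * (p * s - q * r)"
      "(M * s - N * r) * q + (N * p - M * q) * s = N * (p * s - q * r)"
      by (simp_all add: algebra_simps)
    hence "x = J * (of_int (M * s - N * r) * moebius \<delta> t + of_int (N * p - M * q))"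
      unfolding key x using det by simp
    moreover have "of_int (M * s - N * r) * moebius \<delta> t + of_int (N * p - M * q) \<in> lattice1 (moebius \<delta> t)"
      unfolding lattice1_iff by blast
    ultimately show "x \<in> (*) (jfac \<delta> t) ` lattice1 (moebius \<delta> t)"
      unfolding jm(1) by (rule image_eqI)
  next
    fix x assume "x \<in> (*) (jfac \<delta> t) ` lattice1 (moebius \<delta> t)"
    then obtain y where "x = J * y" "y \<in> lattice1 (moebius \<delta> t)" unfolding jm(1) by blast
    then obtain m n where "x = J * (of_int m * moebius \<delta> t + of_int n)" unfolding lattice1_iff by blast
    thus "x \<in> lattice1 t" unfolding key lattice1_iff by blast
  qed
qed

text \<open>The homothety yields mutually inverse integral base changes, so the determinant is \<plusminus>1;
  since both points lie in the upper half-plane it is 1.\<close>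

lemma homothetic_lattice1_moebius:
  assumes "Im w > 0" "Im w' > 0" "lattice1 w = (*) v ` lattice1 w'"
  shows "\<exists>\<gamma>\<in>SL2Z. w = moebius \<gamma> w'"
proof -
  have wne: "Im w \<noteq> 0" using assms(1) by simp
  obtain x y where "w = v * x" "1 = v * y" "x \<in> lattice1 w'" "y \<in> lattice1 w'"
    using lattice1_self[of w] lattice1_one[of w] unfolding assms(3) by blast
  then obtain p q r s where pq: "w = v * (of_int p * w' + of_int q)" and rs: "1 = v * (of_int r * w' + of_int s)"
    unfolding lattice1_iff by blast
  have "v * w' \<in> lattice1 w" "v * 1 \<in> lattice1 w"
    using lattice1_self[of w'] lattice1_one[of w'] unfolding assms(3) by blast+
  then obtain p' q' r' s' where pq': "v * w' = of_int p' * w + of_int q'" and rs': "v = of_int r' * w + of_int s'"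
    unfolding lattice1_iff by auto
  have "w = of_int p * (v * w') + of_int q * v" using pq by (simp add: algebra_simps)
  hence "of_int 1 * w + of_int 0 = of_int (p * p' + q * r') * w + of_int (p * q' + q * s')"
    unfolding pq' rs'[symmetric] unfolding rs' by (simp add: algebra_simps)
  from lattice1_coeffs_unique[OF wne this] have e1: "p * p' + q * r' = 1" "p * q' + q * s' = 0" by simp_all
  have "1 = of_int r * (v * w') + of_int s * v" using rs by (simp add: algebra_simps)
  hence "of_int 0 * w + of_int 1 = of_int (r * p' + s * r') * w + of_int (r * q' + s * s')"
    unfolding pq' rs'[symmetric] unfolding rs' by (simp add: algebra_simps)
  from lattice1_coeffs_unique[OF wne this] have e2: "r * p' + s * r' = 0" "r * q' + s * s' = 1" by simp_all
  have "(p * s - q * r) * (p' * s' - q' * r')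
      = (p * p' + q * r') * (r * q' + s * s') - (p * q' + q * s') * (r * p' + s * r')"
    by (simp add: algebra_simps)
  hence "(p * s - q * r) * (p' * s' - q' * r') = 1" using e1 e2 by simp
  hence det: "p * s - q * r = 1 \<or> p * s - q * r = -1" using pos_zmult_eq_1_iff_lemma by blast
  have J: "of_int r * w' + of_int s \<noteq> 0" using rs by auto
  hence "v = 1 / (of_int r * w' + of_int s)" using rs by (simp add: eq_divide_eq)
  hence wm: "w = moebius (p, q, r, s) w'" unfolding moebius_eq pq by simp
  have "0 < of_int (p * s - q * r) * Im w' / (cmod (of_int r * w' + of_int s))^2"
    using assms(1) unfolding wm Im_moebius .
  hence "p * s - q * r > 0" using assms(2) J
    by (simp add: zero_less_divide_iff zero_less_mult_iff del: of_int_mult of_int_diff)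
  hence "(p, q, r, s) \<in> SL2Z" using det unfolding SL2Z_iff by linarith
  thus ?thesis using wm by blast
qed

lemma qform_act_eq:
  "qform_act (a, b, c) (p, q, r, s) =
     (a * p^2 + b * p * r + c * r^2,
      2 * a * p * q + b * (p * s + q * r) + 2 * c * r * s,
      a * q^2 + b * q * s + c * s^2)"
  by (simp add: qform_act_def)

lemma qform_act_mat_inv:
  assumes "\<gamma> \<in> SL2Z"
  shows "qform_act (qform_act Q \<gamma>) (mat_inv \<gamma>) = Q"
proof -
  obtain a b c p q r s where Q: "Q = (a, b, c)" and \<gamma>: "\<gamma> = (p, q, r, s)" by (cases Q, cases \<gamma>)
  have det: "p * s - q * r = 1" using assms unfolding \<gamma> SL2Z_iff .
  define A where "A = a * p^2 + b * p * r + c * r^2"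
  define B where "B = 2 * a * p * q + b * (p * s + q * r) + 2 * c * r * s"
  define C where "C = a * q^2 + b * q * s + c * s^2"
  have "A * s^2 + B * s * (- r) + C * (- r)^2 = a * (p * s - q * r)^2"
    "2 * A * s * (- q) + B * (s * p + (- q) * (- r)) + 2 * C * (- r) * p = b * (p * s - q * r)^2"
    "A * (- q)^2 + B * (- q) * p + C * p^2 = c * (p * s - q * r)^2"
    unfolding A_def B_def C_def by (simp_all add: power2_eq_square algebra_simps)
  thus ?thesis unfolding Q \<gamma> qform_act_eq mat_inv_def A_def[symmetric] B_def[symmetric] C_def[symmetric]
    using det by (simp add: qform_act_eq)
qed

lemma qform_act_first_coeff_pos:
  assumes "(a, b, c) \<in> Qforms d" "d < 0" "(p, q, r, s) \<in> SL2Z"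
  shows "a * p^2 + b * p * r + c * r^2 > 0"
proof (cases "r = 0")
  case True
  hence "p \<noteq> 0" using assms(3) unfolding SL2Z_iff by auto
  thus ?thesis using True assms(1) by (simp add: Qforms_iff)
next
  case False
  have a: "a > 0" and disc: "b^2 - 4 * a * c = d" using assms(1) by (simp_all add: Qforms_iff)
  have "4 * a * (a * p^2 + b * p * r + c * r^2) = (2 * a * p + b * r)^2 - d * r^2"
    unfolding disc[symmetric] by (simp add: power2_eq_square algebra_simps)
  also have "\<dots> > 0"
  proof -
    have "d * r^2 < 0" using False assms(2) by (simp add: mult_neg_pos)
    thus ?thesis using zero_le_power2[of "2 * a * p + b * r"] by linarith
  qed
  finally show ?thesis using a by (simp add: zero_less_mult_iff)
qed

lemma qform_act_Qforms:
  assumes "Q \<in> Qforms d" "d < 0" "\<gamma> \<in> SL2Z"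
  shows "qform_act Q \<gamma> \<in> Qforms d"
proof -
  obtain a b c p q r s where Q: "Q = (a, b, c)" and \<gamma>: "\<gamma> = (p, q, r, s)" by (cases Q, cases \<gamma>)
  obtain A B C where act: "qform_act Q \<gamma> = (A, B, C)" by (cases "qform_act Q \<gamma>")
  have det: "p * s - q * r = 1" using assms(3) unfolding \<gamma> SL2Z_iff .
  have disc: "b^2 - 4 * a * c = d" and prim: "gcd a (gcd b c) = 1"
    using assms(1) unfolding Q Qforms_iff by simp_all
  have "B^2 - 4 * A * C = (p * s - q * r)^2 * (b^2 - 4 * a * c)"
    using act unfolding Q \<gamma> qform_act_eq by (auto simp: power2_eq_square algebra_simps)
  hence "B^2 - 4 * A * C = d" using det disc by simp
  moreover have "A > 0" using qform_act_first_coeff_pos assms act unfolding Q \<gamma> qform_act_eq by blast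
  moreover have "gcd A (gcd B C) = 1"
  proof -
    define k where "k = gcd A (gcd B C)"
    have "k dvd A" "k dvd B" "k dvd C" unfolding k_def by (auto intro: dvd_trans)
    moreover have "qform_act (A, B, C) (s, - q, - r, p) = (a, b, c)"
      using qform_act_mat_inv[OF assms(3), of Q] act unfolding Q \<gamma> by (simp add: mat_inv_def)
    ultimately have "k dvd a" "k dvd b" "k dvd c" unfolding qform_act_eq
      by (auto intro!: dvd_add dvd_mult2 simp: power2_eq_square)
    hence "k dvd 1" using prim by (metis gcd_greatest)
    moreover have "k \<ge> 0" unfolding k_def by simp
    ultimately show ?thesis unfolding k_def by simp
  qed
  ultimately show ?thesis unfolding act Qforms_iff by simp
qed

text \<open>The point \<gamma>^-1 \<omega>_Q is a root of Q^\<gamma> in the upper half-plane.\<close>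

lemma omegaQ_qform_act:
  assumes "Q \<in> Qforms d" "d < 0" "\<gamma> \<in> SL2Z"
  shows "omegaQ d (qform_act Q \<gamma>) = moebius (mat_inv \<gamma>) (omegaQ d Q)"
proof -
  obtain a b c p q r s where Q: "Q = (a, b, c)" and \<gamma>: "\<gamma> = (p, q, r, s)" by (cases Q, cases \<gamma>)
  obtain A B C where act: "qform_act Q \<gamma> = (A, B, C)" by (cases "qform_act Q \<gamma>")
  define w where "w = omegaQ d Q"
  define z where "z = moebius (mat_inv \<gamma>) w"
  have wIm: "Im w > 0" using Im_omegaQ_pos assms unfolding w_def by blast
  have zIm: "Im z > 0" using Im_moebius_pos[OF mat_inv_SL2Z[OF assms(3)] wIm] unfolding z_def .
  have "jfac \<gamma> z \<noteq> 0" using jfac_nonzero assms(3) zIm by simp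
  moreover have "moebius \<gamma> z = w" using moebius_mat_inv_right[OF assms(3)] wIm unfolding z_def by simp
  ultimately have pq: "of_int p * z + of_int q = w * (of_int r * z + of_int s)"
    unfolding \<gamma> jfac_eq moebius_eq by (simp add: field_simps)
  have "of_int A * z^2 + of_int B * z + of_int C =
      of_int a * (of_int p * z + of_int q)^2 + of_int b * (of_int p * z + of_int q) * (of_int r * z + of_int s)
      + of_int c * (of_int r * z + of_int s)^2"
    using act unfolding Q \<gamma> qform_act_eq by (auto simp: power2_eq_square algebra_simps)
  also have "\<dots> = (of_int r * z + of_int s)^2 * (of_int a * w^2 + of_int b * w + of_int c)"
    unfolding pq by (simp add: power2_eq_square algebra_simps)
  also have "\<dots> = 0" using omegaQ_root assms unfolding Q w_def by simp
  finally have "z = omegaQ d (A, B, C)"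
    using omegaQ_unique_root qform_act_Qforms[OF assms] act zIm assms(2) by metis
  thus ?thesis unfolding act z_def w_def by simp
qed

lemma lattice1_omegaQ_qform_act:
  assumes "Q \<in> Qforms d" "d < 0" "\<delta> \<in> SL2Z"
  shows "lattice1 (omegaQ d Q) = (*) (jfac \<delta> (omegaQ d Q)) ` lattice1 (omegaQ d (qform_act Q (mat_inv \<delta>)))"
proof -
  have "omegaQ d (qform_act Q (mat_inv \<delta>)) = moebius \<delta> (omegaQ d Q)"
    using omegaQ_qform_act[OF assms(1,2) mat_inv_SL2Z[OF assms(3)]] by simp
  moreover have "Im (omegaQ d Q) \<noteq> 0" using Im_omegaQ_pos[OF assms(1,2)] by simp
  ultimately show ?thesis using lattice1_moebius[OF assms(3)] by simp
qed

lemma homothetic_lattice1_omegaQ_imp_equiv: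
  assumes "Q \<in> Qforms d" "Q' \<in> Qforms d" "d < 0"
    and "lattice1 (omegaQ d Q) = (*) v ` lattice1 (omegaQ d Q')"
  shows "\<exists>\<gamma>\<in>SL2Z. Q' = qform_act Q \<gamma>"
proof -
  obtain \<gamma> where \<gamma>: "\<gamma> \<in> SL2Z" and w: "omegaQ d Q = moebius \<gamma> (omegaQ d Q')"
    using homothetic_lattice1_moebius Im_omegaQ_pos assms by metis
  have "omegaQ d (qform_act Q \<gamma>) = omegaQ d Q'"
    unfolding omegaQ_qform_act[OF assms(1,3) \<gamma>] w
    using moebius_mat_inv_left[OF \<gamma>] Im_omegaQ_pos[OF assms(2,3)] by simp
  hence "qform_act Q \<gamma> = Q'" using omegaQ_inj qform_act_Qforms[OF assms(1,3) \<gamma>] assms(2,3) by blast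
  thus ?thesis using \<gamma> by blast
qed

lemma OK_subset_Kfield: "OK d \<subseteq> Kfield d"
proof
  fix x assume "x \<in> OK d"
  then obtain m n where x: "x = of_int m + of_int n * OK_generator d" unfolding OK_iff by blast
  have "x = of_real (of_int m + of_int n * of_int d / 2) + of_real (of_int n / 2) * sqrt_disc d"
    unfolding x OK_generator_def by (simp add: field_simps)
  thus "x \<in> Kfield d" unfolding Kfield_def
    by (intro CollectI exI[of _ "of_int m + of_int n * of_int d / 2"] exI[of _ "of_int n / 2"]) simp
qed

lemma lattice1_omegaQ_subset_Kfield: "lattice1 (omegaQ d (a, b, c)) \<subseteq> Kfield d"
proof
  fix x assume "x \<in> lattice1 (omegaQ d (a, b, c))"
  then obtain m n where x: "x = of_int m * omegaQ d (a, b, c) + of_int n" unfolding lattice1_iff by blast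
  have "x = of_real (of_int m * (- of_int b / (2 * of_int a)) + of_int n)
      + of_real (of_int m * (1 / (2 * of_int a))) * sqrt_disc d"
    unfolding x omegaQ_eq_real_combination by (simp add: algebra_simps)
  thus "x \<in> Kfield d" unfolding Kfield_def
    by (intro CollectI exI[of _ "of_int m * (- of_int b / (2 * of_int a)) + of_int n"]
        exI[of _ "of_int m * (1 / (2 * of_int a))"]) simp
qed

lemma integral_coprime_intro:
  assumes "neg_disc d" "X \<subseteq> OK d" "OK_module d X" "of_int a \<in> X" "a \<noteq> 0" "gcd (int N) a = 1"
  shows "integral_coprime d N X"
proof -
  have "integral_ideal d X"
    unfolding integral_ideal_def frac_ideal_def
    using assms(2-5) OK_subset_Kfield by (auto simp: OK_module_def intro!: bexI[of _ 1])
  moreover have "ideal_add X (modulus_ideal d N) = OK d"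
  proof (intro set_eqI iffI)
    fix x assume "x \<in> ideal_add X (modulus_ideal d N)"
    then obtain y z where "x = y + of_int (int N) * z" "y \<in> X" "z \<in> OK d"
      unfolding ideal_add_def modulus_ideal_def by auto
    thus "x \<in> OK d" using assms(2) OK_add OK_of_int_mult by blast
  next
    fix x assume x: "x \<in> OK d"
    obtain u v where uv: "u * int N + v * a = 1" using bezout_int[of "int N" a] assms(6) by auto
    have "x = (x * of_int v) * of_int a + of_nat N * (x * of_int u)"
    proof -
      have "of_int u * of_nat N + of_int v * of_int a = (1::complex)"
        using arg_cong[OF uv, of "of_int :: int \<Rightarrow> complex"] by simp
      thus ?thesis by (simp add: algebra_simps flip: distrib_left)
    qed
    moreover have "(x * of_int v) * of_int a \<in> X"
    proof -
      have "x * of_int v \<in> OK d" using OK_of_int_mult[OF x, of v] by (simp add: mult.commute)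
      thus ?thesis using assms(3,4) unfolding OK_module_def by blast
    qed
    moreover have "of_nat N * (x * of_int u) \<in> modulus_ideal d N"
      unfolding modulus_ideal_def using OK_of_int_mult[OF x, of u] by (auto simp: mult.commute)
    ultimately show "x \<in> ideal_add X (modulus_ideal d N)" unfolding ideal_add_def by blast
  qed
  ultimately show ?thesis unfolding integral_coprime_def by blast
qed

lemma lattice1_omegaQ_scaled_in_OK:
  assumes "(a, b, c) \<in> Qforms d" "x \<in> lattice1 (omegaQ d (a, b, c))"
  shows "of_int a * x \<in> OK d"
proof -
  obtain m n where x: "x = of_int m * omegaQ d (a, b, c) + of_int n" using assms(2) unfolding lattice1_iff by blast
  have "of_int a * x = of_int (a * n - m * ((b + d) div 2)) + of_int m * OK_generator d"
    unfolding x OK_generator_eq_omegaQ[OF assms(1)] by (simp add: algebra_simps)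
  thus ?thesis unfolding OK_iff by blast
qed

text \<open>[\<omega>_Q, 1] \<cdot> a O_K = a [\<omega>_Q, 1] is integral, and both a O_K and a [\<omega>_Q, 1] are coprime to n
  because they contain a.\<close>

lemma lattice1_omegaQ_in_IK:
  assumes "Q \<in> QformsN d N" "neg_disc d"
  shows "lattice1 (omegaQ d Q) \<in> IK d N"
proof -
  obtain a b c where Q: "Q = (a, b, c)" by (cases Q)
  have QF: "(a, b, c) \<in> Qforms d" and coprime: "gcd (int N) a = 1" using assms(1) unfolding Q QformsN_def by auto
  have a: "a > 0" using QF by (simp add: Qforms_iff)
  have d0: "d < 0" using assms(2) by (simp add: neg_disc_def)
  define L where "L = lattice1 (omegaQ d (a, b, c))"
  have M: "OK_module d L" using lattice1_omegaQ_OK_module[OF QF d0] unfolding L_def .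
  have aL: "(*) (of_int a) ` L \<subseteq> OK d" using lattice1_omegaQ_scaled_in_OK[OF QF] unfolding L_def by blast
  have "L \<noteq> {0}" using lattice1_one[of "omegaQ d (a, b, c)"] unfolding L_def by force
  hence frac: "frac_ideal d L"
    unfolding frac_ideal_def
    using M lattice1_omegaQ_subset_Kfield aL a
    by (auto simp: OK_module_def L_def intro!: bexI[of _ "of_int a"])
  have "(*) (of_int a) ` OK d \<subseteq> OK d" using OK_of_int_mult by blast
  moreover have "of_int a \<in> (*) (of_int a) ` OK d" "of_int a \<in> (*) (of_int a) ` L"
    using image_eqI[of "of_int a :: complex" "(*) (of_int a)" 1] unfolding L_def by simp_all
  ultimately have "integral_coprime d N (principal_ideal d (of_int a))"
    and "integral_coprime d N ((*) (of_int a) ` L)"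
    using integral_coprime_intro[OF assms(2) _ OK_module_scale[OF OK_module_OK[OF assms(2)]] _ _ coprime]
      integral_coprime_intro[OF assms(2) aL OK_module_scale[OF M] _ _ coprime] a
    unfolding principal_ideal_eq_image by simp_all
  moreover have "ideal_mult L (principal_ideal d (of_int a)) = (*) (of_int a) ` L"
    using ideal_mult_principal_ideal[OF M] ideal_mult_commute by metis
  ultimately show ?thesis using frac unfolding IK_def Q L_def by blast
qed

lemma same_class_homothetic:
  assumes "P \<subseteq> PK d N" "OK_module d B" "same_class P A B"
  obtains v where "v \<noteq> 0" "principal_ideal d v \<in> P" "A = (*) v ` B"
  using assms ideal_mult_principal_ideal unfolding same_class_def PK_def by blast

text \<open>The multiplier ring being O_K, two homothety factors between the same lattices generate the
  same principal ideal.\<close>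

lemma same_class_iff_jfac_in:
  assumes "Q \<in> Qforms d" "neg_disc d" "\<delta> \<in> SL2Z" "P \<subseteq> PK d N"
  shows "same_class P (lattice1 (omegaQ d Q)) (lattice1 (omegaQ d (qform_act Q (mat_inv \<delta>))))
    \<longleftrightarrow> principal_ideal d (jfac \<delta> (omegaQ d Q)) \<in> P"
    (is "same_class P ?L ?L' \<longleftrightarrow> principal_ideal d ?j \<in> P")
proof -
  have d0: "d < 0" using assms(2) by (simp add: neg_disc_def)
  have Q': "qform_act Q (mat_inv \<delta>) \<in> Qforms d" using qform_act_Qforms[OF assms(1) d0 mat_inv_SL2Z[OF assms(3)]] .
  have j: "?j \<noteq> 0" using jfac_nonzero[OF assms(3)] Im_omegaQ_pos[OF assms(1) d0] by simp
  have L: "?L = (*) ?j ` ?L'" using lattice1_omegaQ_qform_act[OF assms(1) d0 assms(3)] .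
  have M: "OK_module d ?L'" using lattice1_omegaQ_OK_module[OF Q' d0] .
  show ?thesis
  proof
    assume "same_class P ?L ?L'"
    then obtain v where v: "v \<noteq> 0" "principal_ideal d v \<in> P" "?L = (*) v ` ?L'"
      using same_class_homothetic[OF assms(4) M] by metis
    hence "principal_ideal d v = principal_ideal d ?j"
      using principal_ideal_eq_if_homothetic_lattice1[OF Q' assms(2) _ j] L by simp
    thus "principal_ideal d ?j \<in> P" using v by simp
  next
    assume "principal_ideal d ?j \<in> P"
    thus "same_class P ?L ?L'"
      unfolding same_class_def L ideal_mult_principal_ideal[OF M, symmetric] by blast
  qed
qed

lemma in_coset_isotropy_iff:
  assumes "Q \<in> Qforms d" "d < 0" "\<delta> \<in> SL2Z" "SL2_subgroup G"
  shows "\<delta> \<in> set_mult G (isotropy (omegaQ d Q)) \<longleftrightarrow> (\<exists>g\<in>G. qform_act Q (mat_inv \<delta>) = qform_act Q g)"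
proof -
  have G: "G \<subseteq> SL2Z" "\<forall>g\<in>G. mat_inv g \<in> G" using assms(4) by (auto simp: SL2_subgroup_def)
  define w where "w = omegaQ d Q"
  have wIm: "Im w \<noteq> 0" using Im_omegaQ_pos[OF assms(1,2)] unfolding w_def by simp
  have omega_act: "omegaQ d (qform_act Q (mat_inv g)) = moebius g w" if "g \<in> SL2Z" for g
    using omegaQ_qform_act[OF assms(1,2) mat_inv_SL2Z[OF that]] unfolding w_def by simp
  have form_eq_iff: "qform_act Q (mat_inv \<delta>) = qform_act Q (mat_inv g) \<longleftrightarrow> moebius \<delta> w = moebius g w"
    if "g \<in> SL2Z" for g
    using omegaQ_inj qform_act_Qforms[OF assms(1,2)] mat_inv_SL2Z assms(3) that assms(2)
    by (metis omega_act)
  show ?thesis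
  proof
    assume "\<delta> \<in> set_mult G (isotropy (omegaQ d Q))"
    then obtain g h where gh: "\<delta> = mat_mult g h" "g \<in> G" "h \<in> SL2Z" "moebius h w = w"
      unfolding set_mult_def isotropy_def w_def by blast
    hence "moebius \<delta> w = moebius g w" using moebius_mat_mult[OF gh(3) wIm] by simp
    thus "\<exists>g\<in>G. qform_act Q (mat_inv \<delta>) = qform_act Q g"
      using form_eq_iff G gh(2) by (metis mat_inv_mat_inv subsetD)
  next
    assume "\<exists>g\<in>G. qform_act Q (mat_inv \<delta>) = qform_act Q g"
    then obtain g where g: "g \<in> G" "qform_act Q (mat_inv \<delta>) = qform_act Q (mat_inv (mat_inv g))" by auto
    have gS: "mat_inv g \<in> SL2Z" using g(1) G by blast
    define h where "h = mat_mult g \<delta>"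
    have "moebius h w = moebius g (moebius \<delta> w)" unfolding h_def using moebius_mat_mult[OF assms(3) wIm] .
    also have "\<dots> = w" using form_eq_iff[OF gS] g(2) moebius_mat_inv_left[OF gS wIm] by simp
    finally have "h \<in> isotropy w" unfolding h_def isotropy_def using mat_mult_SL2Z G g(1) assms(3) by blast
    moreover have "\<delta> = mat_mult (mat_inv g) h"
      unfolding h_def using mat_mult_inv_cancel_left G(1) g(1) by (metis subsetD)
    ultimately show "\<delta> \<in> set_mult G (isotropy (omegaQ d Q))"
      unfolding set_mult_def w_def using G(2) g(1) by blast
  qed
qed

lemma QformsN_subset_Qforms: "QformsN d N \<subseteq> Qforms d"
  by (auto simp: QformsN_def)

lemma phi_well_defined_injective_iff:
  assumes "neg_disc d"
  shows "phi_well_defined d N P G \<and> phi_injective d N P G \<longleftrightarrow>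
    (\<forall>Q\<in>QformsN d N. \<forall>Q'\<in>QformsN d N.
       same_class P (lattice1 (omegaQ d Q)) (lattice1 (omegaQ d Q')) \<longleftrightarrow> form_equiv d N G Q Q')"
  using lattice1_omegaQ_in_IK[OF _ assms]
  unfolding phi_well_defined_def phi_injective_def form_equiv_def by blast

lemma property_P_iff:
  assumes "neg_disc d" "P \<subseteq> PK d N" "SL2_subgroup G"
  shows "property_P d N P G \<longleftrightarrow>
    (\<forall>Q\<in>QformsN d N. \<forall>Q'\<in>QformsN d N. (\<exists>\<delta>\<in>SL2Z. Q' = qform_act Q (mat_inv \<delta>)) \<longrightarrow>
       (same_class P (lattice1 (omegaQ d Q)) (lattice1 (omegaQ d Q')) \<longleftrightarrow> form_equiv d N G Q Q'))"
proof -
  have d0: "d < 0" using assms(1) by (simp add: neg_disc_def)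
  have "(principal_ideal d (jfac \<delta> (omegaQ d Q)) \<in> P \<longleftrightarrow> \<delta> \<in> set_mult G (isotropy (omegaQ d Q)))
    \<longleftrightarrow> (same_class P (lattice1 (omegaQ d Q)) (lattice1 (omegaQ d (qform_act Q (mat_inv \<delta>))))
      \<longleftrightarrow> form_equiv d N G Q (qform_act Q (mat_inv \<delta>)))"
    if "Q \<in> QformsN d N" "\<delta> \<in> SL2Z" "qform_act Q (mat_inv \<delta>) \<in> QformsN d N" for Q \<delta>
    using that QformsN_subset_Qforms same_class_iff_jfac_in[OF _ assms(1) that(2) assms(2)]
      in_coset_isotropy_iff[OF _ d0 that(2) assms(3)]
    unfolding form_equiv_def by blast
  thus ?thesis unfolding property_P_def by blast
qed

lemma related_forms_SL2_translates:
  assumes "neg_disc d" "P \<subseteq> PK d N" "SL2_subgroup G" "Q \<in> QformsN d N" "Q' \<in> QformsN d N"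
    and "same_class P (lattice1 (omegaQ d Q)) (lattice1 (omegaQ d Q')) \<or> form_equiv d N G Q Q'"
  shows "\<exists>\<delta>\<in>SL2Z. Q' = qform_act Q (mat_inv \<delta>)"
proof -
  have d0: "d < 0" using assms(1) by (simp add: neg_disc_def)
  have Q: "Q \<in> Qforms d" "Q' \<in> Qforms d" using assms(4,5) QformsN_subset_Qforms by blast+
  have "\<exists>\<gamma>\<in>SL2Z. Q' = qform_act Q \<gamma>"
    using assms(6)
  proof
    assume "same_class P (lattice1 (omegaQ d Q)) (lattice1 (omegaQ d Q'))"
    then obtain v where "lattice1 (omegaQ d Q) = (*) v ` lattice1 (omegaQ d Q')"
      using same_class_homothetic[OF assms(2) lattice1_omegaQ_OK_module[OF Q(2) d0]] by metis
    thus ?thesis using homothetic_lattice1_omegaQ_imp_equiv[OF Q d0] by blast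
  next
    assume "form_equiv d N G Q Q'"
    thus ?thesis using assms(3) unfolding form_equiv_def SL2_subgroup_def by blast
  qed
  thus ?thesis using mat_inv_SL2Z by (metis mat_inv_mat_inv)
qed

theorem proposition2p4:
  fixes d :: int and N :: nat and P :: "complex set set" and \<Gamma> :: "mat2 set"
  assumes "fund_disc_neg d"
    and "N > 0"
    and "ideal_subgroup d N P"
    and "PK1 d N \<subseteq> P"
    and "P \<subseteq> PK d N"
    and "SL2_subgroup \<Gamma>"
  shows "(phi_well_defined d N P \<Gamma> \<and> phi_injective d N P \<Gamma>) \<longleftrightarrow> property_P d N P \<Gamma>"
proof -
  have d: "neg_disc d" using fund_disc_neg_imp_neg_disc[OF assms(1)] .
  show ?thesis
    unfolding phi_well_defined_injective_iff[OF d] property_P_iff[OF d assms(5,6)]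
    using related_forms_SL2_translates[OF d assms(5,6)] by blast
qed

end
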